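(* Let $q>1$ and $n>1$ be integers and let $S$ be a special orientable sequence of order $n$ over $\mathbb{Z}_q$ (an $\mathcal{SOS}_q(n)$). Then the period of $S$ is at most \[ \frac{q^n-q^{(n+1)/2}-q^{(n-1)/2}+1}{2} \text{ if $q$ and $n$ are both odd;}\qquad \frac{q^n-2q^{n/2}+1}{2} \text{ if $q$ is odd and $n$ is even;} \] \[ \frac{q^n-q^{(n+1)/2}-2q^{(n-1)/2}+2^{(n+3)/2}-2^{(n+1)/2}}{2} \text{ if $q$ is even and $n$ is odd;}\qquad \frac{q^n-2q^{n/2}+2^{(n+2)/2}-2^{n/2}}{2} \text{ if $q$ and $n$ are both even.} \]
   Context: For a periodic sequence $S=(s_i)$ over $\mathbb{Z}_q$ write $\mathbf{s}_n(i)=(s_i,s_{i+1},\ldots,s_{i+n-1})$. For an $n$-tuple $\mathbf{u}=(u_0,\ldots,u_{n-1})$, its reverse is $\mathbf{u}^R=(u_{n-1},\ldots,u_0)$ and its negative is $-\mathbf{u}=(-u_0,\ldots,-u_{n-1})$. A $q$-ary $n$-window sequence is a periodic sequence over $\mathbb{Z}_q$ of period $m$ such that $\mathbf{s}_n(i)=\mathbf{s}_n(j)$ implies $i\equiv j\pmod m$. It is an orientable sequence of order $n$ ($\mathcal{OS}_q(n)$) if moreover $\mathbf{s}_n(i)\neq\mathbf{s}_n(j)^R$ for all $i,j$; negative orientable ($\mathcal{NOS}_q(n)$) if $\mathbf{s}_n(i)\neq-\mathbf{s}_n(j)^R$ for all $i,j$; and special orientable ($\mathcal{SOS}_q(n)$)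 if it is both orientable and negative orientable. *)

theory Defs
  imports Main
begin

definition periodic_seq :: "int \<Rightarrow> nat \<Rightarrow> (nat \<Rightarrow> int) \<Rightarrow> bool" where
  "periodic_seq q m s \<longleftrightarrow> m \<ge> 1 \<and> (\<forall>i. s i \<in> {0..<q}) \<and> (\<forall>i. s (i + m) = s i)"

definition window :: "(nat \<Rightarrow> int) \<Rightarrow> nat \<Rightarrow> nat \<Rightarrow> int list" where
  "window s n i = map (\<lambda>k. s (i + k)) [0..<n]"

definition neg_tuple :: "int \<Rightarrow> int list \<Rightarrow> int list" where
  "neg_tuple q u = map (\<lambda>x. (- x) mod q) u"

definition n_window_seq :: "int \<Rightarrow> nat \<Rightarrow> nat \<Rightarrow> (nat \<Rightarrow> int) \<Rightarrow> bool" where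
  "n_window_seq q n m s \<longleftrightarrow> periodic_seq q m s \<and>
     (\<forall>i j. window s n i = window s n j \<longrightarrow> i mod m = j mod m)"

definition orientable_seq :: "int \<Rightarrow> nat \<Rightarrow> nat \<Rightarrow> (nat \<Rightarrow> int) \<Rightarrow> bool" where
  "orientable_seq q n m s \<longleftrightarrow> n_window_seq q n m s \<and>
     (\<forall>i j. window s n i \<noteq> rev (window s n j))"

definition neg_orientable_seq :: "int \<Rightarrow> nat \<Rightarrow> nat \<Rightarrow> (nat \<Rightarrow> int) \<Rightarrow> bool" where
  "neg_orientable_seq q n m s \<longleftrightarrow> n_window_seq q n m s \<and>
     (\<forall>i j. window s n i \<noteq> neg_tuple q (rev (window s n j)))"

definition special_orientable_seq :: "int \<Rightarrow> nat \<Rightarrow> nat \<Rightarrow> (nat \<Rightarrow> int) \<Rightarrow> bool" where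
  "special_orientable_seq q n m s \<longleftrightarrow> orientable_seq q n m s \<and> neg_orientable_seq q n m s"

end

theory Submission
  imports Defs
begin

text \<open>
  The windows of a special orientable sequence and their reversals are \<open>2m\<close> distinct
  \<open>n\<close>-tuples over \<open>{0..<q}\<close>, none of which is a palindrome (\<open>u\<^sup>R = u\<close>) or a negative
  palindrome (\<open>u\<^sup>R = -u\<close>). Both kinds are counted as tuples with \<open>u\<^sup>R = g u\<close> for an
  involution \<open>g\<close>: such a tuple is determined by its first \<open>\<lfloor>n/2\<rfloor>\<close> entries and, for odd \<open>n\<close>,
  a \<open>g\<close>-fixed middle entry. Negation fixes \<open>0\<close> and, for even \<open>q\<close>, also \<open>q/2\<close>; the tuples of
  both kinds are the palindromes over these fixed points. Inclusion-exclusion then bounds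
  \<open>2m\<close> by \<open>q\<^sup>n\<close> minus the number of tuples of either kind.
\<close>

text \<open>For \<open>g = id\<close> these are the palindromes, for \<open>g x = (- x) mod q\<close> the tuples \<open>u = - u\<^sup>R\<close>.\<close>
definition mirror_lists :: "'a set \<Rightarrow> ('a \<Rightarrow> 'a) \<Rightarrow> nat \<Rightarrow> 'a list set" where
  "mirror_lists B g n = {u. length u = n \<and> set u \<subseteq> B \<and> rev u = map g u}"

lemma mirror_lists_0: "mirror_lists B g 0 = {[]}"
  by (auto simp: mirror_lists_def)

lemma mirror_lists_1: "mirror_lists B g 1 = (\<lambda>x. [x]) ` {x \<in> B. g x = x}"
  by (auto simp: mirror_lists_def length_Suc_conv)

lemma rev_snoc_Cons_eq_map_iff:
  "rev (a # v @ [b]) = map g (a # v @ [b]) \<longleftrightarrow> b = g a \<and> rev v = map g v \<and> a = g b"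
  by simp

lemma mirror_lists_add2:
  assumes "\<And>x. x \<in> B \<Longrightarrow> g x \<in> B" and "\<And>x. x \<in> B \<Longrightarrow> g (g x) = x"
  shows "mirror_lists B g (Suc (Suc n)) = (\<lambda>(a, v). a # v @ [g a]) ` (B \<times> mirror_lists B g n)"
proof (intro equalityI subsetI)
  fix u assume u: "u \<in> mirror_lists B g (Suc (Suc n))"
  then have "length u = Suc (Suc n)" and "set u \<subseteq> B"
    by (simp_all add: mirror_lists_def)
  then obtain a w where "u = a # w" and "length w = Suc n"
    by (auto simp: length_Suc_conv)
  then obtain v b where uv: "u = a # v @ [b]"
    by (auto simp: length_Suc_conv_rev)
  have "rev (a # v @ [b]) = map g (a # v @ [b])"
    using u unfolding uv mirror_lists_def by blast
  \<comment> \<open>not by simp: as rewrite rules, \<open>b = g a\<close> and \<open>a = g b\<close> would loop\<close>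
  then have "b = g a" and "rev v = map g v"
    unfolding rev_snoc_Cons_eq_map_iff by blast+
  with uv \<open>length u = Suc (Suc n)\<close> \<open>set u \<subseteq> B\<close>
  show "u \<in> (\<lambda>(a, v). a # v @ [g a]) ` (B \<times> mirror_lists B g n)"
    by (auto simp: mirror_lists_def)
next
  fix u assume "u \<in> (\<lambda>(a, v). a # v @ [g a]) ` (B \<times> mirror_lists B g n)"
  then obtain a v where "a \<in> B" "v \<in> mirror_lists B g n" "u = a # v @ [g a]"
    by auto
  then show "u \<in> mirror_lists B g (Suc (Suc n))"
    using assms by (simp add: mirror_lists_def)
qed

lemma card_mirror_lists:
  assumes "finite B" and "\<And>x. x \<in> B \<Longrightarrow> g x \<in> B" and "\<And>x. x \<in> B \<Longrightarrow> g (g x) = x"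
  shows "card (mirror_lists B g n) = card B ^ (n div 2) * card {x \<in> B. g x = x} ^ (n mod 2)"
proof (induction n rule: nat_induct2)
  case 0
  show ?case by (simp add: mirror_lists_0)
next
  case 1
  have "card (mirror_lists B g 1) = card {x \<in> B. g x = x}"
    unfolding mirror_lists_1 by (simp add: card_image inj_on_def)
  then show ?case by simp
next
  case (step n)
  have "inj_on (\<lambda>(a, v). a # v @ [g a]) (B \<times> mirror_lists B g n)"
    by (rule inj_onI) auto
  then have "card (mirror_lists B g (n + 2)) = card B * card (mirror_lists B g n)"
    by (simp add: mirror_lists_add2 assms card_image card_cartesian_product)
  with step.IH show ?case by simp
qed

lemma card_palindromes:
  assumes "finite B"
  shows "card (mirror_lists B id n) = card B ^ ((n + 1) div 2)"
proof -
  have "n div 2 + n mod 2 = (n + 1) div 2"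
    by presburger
  then show ?thesis
    using card_mirror_lists[of B id n] assms by (simp flip: power_add)
qed

lemma mirror_lists_map_rev:
  assumes "u \<in> mirror_lists B g n"
  shows "map g (rev u) = u"
proof -
  have "rev u = map g u"
    using assms by (simp add: mirror_lists_def)
  then show ?thesis
    by (metis rev_map rev_rev_ident)
qed

lemma rev_in_mirror_lists:
  assumes "u \<in> mirror_lists B g n"
  shows "rev u \<in> mirror_lists B g n"
proof -
  have "length u = n" and "set u \<subseteq> B"
    using assms by (simp_all add: mirror_lists_def)
  with mirror_lists_map_rev[OF assms] show ?thesis
    unfolding mirror_lists_def by simp
qed

lemma palindromes_Int_mirror_lists:
  "mirror_lists B id n \<inter> mirror_lists B g n = mirror_lists {x \<in> B. g x = x} id n"
proof (intro equalityI subsetI)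
  fix u assume "u \<in> mirror_lists B id n \<inter> mirror_lists B g n"
  then have "map g u = u" and "u \<in> mirror_lists B id n"
    by (auto simp: mirror_lists_def)
  then show "u \<in> mirror_lists {x \<in> B. g x = x} id n"
    by (auto simp: mirror_lists_def map_eq_conv[where g = id, simplified])
next
  fix u assume u: "u \<in> mirror_lists {x \<in> B. g x = x} id n"
  then have "map g u = u"
    by (intro map_idI) (auto simp: mirror_lists_def)
  with u show "u \<in> mirror_lists B id n \<inter> mirror_lists B g n"
    by (auto simp: mirror_lists_def)
qed

lemma minus_mod_minus_mod:
  fixes q x :: int
  assumes "x \<in> {0..<q}"
  shows "(- ((- x) mod q)) mod q = x"
proof -
  have "(- ((- x) mod q)) mod q = (- (- x)) mod q"
    by (rule mod_minus_eq)
  with assms show ?thesis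
    by simp
qed

lemma card_self_negative_residues:
  fixes q :: int
  assumes "q > 0"
  shows "card {x \<in> {0..<q}. (- x) mod q = x} = (if even q then 2 else 1)"
proof -
  have "(- x) mod q = x \<longleftrightarrow> x = 0 \<or> 2 * x = q" if "x \<in> {0..<q}" for x
  proof (cases "x = 0")
    case False
    have "(- x) mod q = (q - x) mod q"
      by (simp add: mod_diff_left_eq[symmetric])
    also have "\<dots> = q - x"
      using that False by (intro mod_pos_pos_trivial) auto
    finally show ?thesis
      using False by auto
  qed simp
  then have "{x \<in> {0..<q}. (- x) mod q = x} = {x \<in> {0..<q}. x = 0 \<or> 2 * x = q}"
    by blast
  also have "\<dots> = (if even q then {0, q div 2} else {0})"
    using assms by auto
  moreover have "q div 2 \<noteq> 0" if "even q"
    using assms that by auto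
  ultimately show ?thesis
    by simp
qed

lemma card_add_le_card_Int:
  assumes "finite A" and "P \<subseteq> A" and "F \<subseteq> A" and "X \<subseteq> A - (P \<union> F)"
  shows "card X + card P + card F \<le> card A + card (P \<inter> F)"
proof -
  have "finite P" and "finite F"
    using assms finite_subset by blast+
  then have "card (P \<union> F) + card (P \<inter> F) = card P + card F"
    by (rule card_Un_Int[symmetric])
  moreover have "card X \<le> card A - card (P \<union> F)"
    using assms card_mono[of "A - (P \<union> F)" X] card_Diff_subset[of "P \<union> F" A]
    by (simp add: \<open>finite P\<close> \<open>finite F\<close>)
  moreover have "card (P \<union> F) \<le> card A"
    using assms by (intro card_mono) auto
  ultimately show ?thesis
    by linarith
qed

lemma periodic_seq_modulus_pos: "periodic_seq q m s \<Longrightarrow> q > 0"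
  by (auto simp: periodic_seq_def)

lemma periodic_seq_window_in_lists:
  "periodic_seq q m s \<Longrightarrow> window s n i \<in> {u. set u \<subseteq> {0..<q} \<and> length u = n}"
  by (auto simp: periodic_seq_def window_def)

lemma n_window_seq_card_windows:
  assumes "n_window_seq q n m s"
  shows "card (window s n ` {0..<m}) = m"
proof -
  have "inj_on (window s n) {0..<m}"
    using assms unfolding n_window_seq_def by (intro inj_onI) (metis atLeastLessThan_iff mod_less)
  then show ?thesis
    by (simp add: card_image)
qed

lemma orientable_seq_card_windows_Un_rev:
  assumes "orientable_seq q n m s"
  shows "card (window s n ` {0..<m} \<union> rev ` window s n ` {0..<m}) = 2 * m"
proof -
  let ?W = "window s n ` {0..<m}"
  have "?W \<inter> rev ` ?W = {}"
    using assms by (auto simp: orientable_seq_def)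
  moreover have "card (rev ` ?W) = card ?W"
    by (simp add: card_image)
  moreover have "card ?W = m"
    using assms n_window_seq_card_windows unfolding orientable_seq_def by blast
  ultimately show ?thesis
    by (simp add: card_Un_disjoint)
qed

lemma orientable_seq_window_not_palindrome:
  assumes "orientable_seq q n m s"
  shows "window s n i \<notin> mirror_lists B id n"
proof
  assume "window s n i \<in> mirror_lists B id n"
  then have "window s n i = rev (window s n i)"
    using mirror_lists_map_rev by fastforce
  with assms show False
    unfolding orientable_seq_def by blast
qed

lemma neg_orientable_seq_window_not_neg_palindrome:
  assumes "neg_orientable_seq q n m s"
  shows "window s n i \<notin> mirror_lists B (\<lambda>x. (- x) mod q) n"
proof
  assume "window s n i \<in> mirror_lists B (\<lambda>x. (- x) mod q) n"
  then have "window s n i = neg_tuple q (rev (window s n i))"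
    unfolding neg_tuple_def using mirror_lists_map_rev by fastforce
  with assms show False
    unfolding neg_orientable_seq_def by blast
qed

lemma special_orientable_seq_windows_avoid:
  assumes "special_orientable_seq q n m s"
  defines "W \<equiv> window s n ` {0..<m}" and "B \<equiv> {0..<q}"
  shows "W \<union> rev ` W \<subseteq> {u. set u \<subseteq> B \<and> length u = n}
                         - (mirror_lists B id n \<union> mirror_lists B (\<lambda>x. (- x) mod q) n)"
proof -
  let ?A = "{u. set u \<subseteq> B \<and> length u = n}"
  let ?M = "mirror_lists B id n \<union> mirror_lists B (\<lambda>x. (- x) mod q) n"
  have ori: "orientable_seq q n m s" and nori: "neg_orientable_seq q n m s"
    using assms by (simp_all add: special_orientable_seq_def)
  then have per: "periodic_seq q m s"
    by (simp add: orientable_seq_def n_window_seq_def)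
  have window_avoids: "window s n i \<in> ?A - ?M" for i
    using periodic_seq_window_in_lists[OF per]
      orientable_seq_window_not_palindrome[OF ori]
      neg_orientable_seq_window_not_neg_palindrome[OF nori]
    by (simp add: B_def)
  have "rev (window s n i) \<in> ?A - ?M" for i
    using window_avoids[of i] rev_in_mirror_lists[of "rev (window s n i)"] by auto
  with window_avoids show ?thesis
    unfolding W_def by blast
qed

lemma special_orientable_seq_period_bound:
  fixes q c :: int
  assumes so: "special_orientable_seq q n m s" and c: "c = (if even q then 2 else 1)"
  shows "2 * int m + q ^ ((n + 1) div 2) + q ^ (n div 2) * c ^ (n mod 2)
           \<le> q ^ n + c ^ ((n + 1) div 2)"
proof -
  define B where "B = {0..<q}"
  define neg where "neg x = (- x) mod q" for x
  define W where "W = window s n ` {0..<m}"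
  let ?A = "{u. set u \<subseteq> B \<and> length u = n}"
  let ?P = "mirror_lists B id n" and ?F = "mirror_lists B neg n" and ?C = "{x \<in> B. neg x = x}"
  have ori: "orientable_seq q n m s"
    using so by (simp add: special_orientable_seq_def)
  then have "q > 0"
    by (auto simp: orientable_seq_def n_window_seq_def intro: periodic_seq_modulus_pos)
  have "finite B"
    by (simp add: B_def)
  have neg_B: "neg x \<in> B" and neg_neg: "x \<in> B \<Longrightarrow> neg (neg x) = x" for x
    using \<open>q > 0\<close> minus_mod_minus_mod by (simp_all add: neg_def B_def)
  have card_fix: "int (card ?C) = c"
    using card_self_negative_residues[OF \<open>q > 0\<close>] c by (simp add: B_def neg_def)
  have "W \<union> rev ` W \<subseteq> ?A - (?P \<union> ?F)"
    using special_orientable_seq_windows_avoid[OF so] by (simp add: W_def B_def neg_def [abs_def])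
  then have "card (W \<union> rev ` W) + card ?P + card ?F \<le> card ?A + card (?P \<inter> ?F)"
    by (intro card_add_le_card_Int) (auto simp: B_def mirror_lists_def finite_lists_length_eq)
  moreover have "card (W \<union> rev ` W) = 2 * m"
    unfolding W_def by (rule orientable_seq_card_windows_Un_rev[OF ori])
  moreover have "card ?A = card B ^ n"
    using \<open>finite B\<close> by (rule card_lists_length_eq)
  moreover have "card ?P = card B ^ ((n + 1) div 2)"
    using \<open>finite B\<close> by (rule card_palindromes)
  moreover have "card ?F = card B ^ (n div 2) * card ?C ^ (n mod 2)"
    using \<open>finite B\<close> neg_B neg_neg by (rule card_mirror_lists)
  moreover have "card (?P \<inter> ?F) = card ?C ^ ((n + 1) div 2)"
    unfolding palindromes_Int_mirror_lists using \<open>finite B\<close> by (intro card_palindromes) simp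
  ultimately have "2 * m + card B ^ ((n + 1) div 2) + card B ^ (n div 2) * card ?C ^ (n mod 2)
                     \<le> card B ^ n + card ?C ^ ((n + 1) div 2)"
    by simp
  then have "int (2 * m + card B ^ ((n + 1) div 2) + card B ^ (n div 2) * card ?C ^ (n mod 2))
               \<le> int (card B ^ n + card ?C ^ ((n + 1) div 2))"
    by (simp only: of_nat_le_iff)
  moreover have "int (card B) = q"
    using \<open>q > 0\<close> by (simp add: B_def)
  ultimately show ?thesis
    using card_fix by simp
qed

theorem theorem2p1:
  fixes q :: int and n m :: nat and s :: "nat \<Rightarrow> int"
  assumes "q > 1" and "n > 1"
    and "special_orientable_seq q n m s"
  shows "(odd q \<and> odd n \<longrightarrow>
            2 * int m \<le> q ^ n - q ^ ((n + 1) div 2) - q ^ ((n - 1) div 2) + 1)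
       \<and> (odd q \<and> even n \<longrightarrow>
            2 * int m \<le> q ^ n - 2 * q ^ (n div 2) + 1)
       \<and> (even q \<and> odd n \<longrightarrow>
            2 * int m \<le> q ^ n - q ^ ((n + 1) div 2) - 2 * q ^ ((n - 1) div 2)
                          + 2 ^ ((n + 3) div 2) - 2 ^ ((n + 1) div 2))
       \<and> (even q \<and> even n \<longrightarrow>
            2 * int m \<le> q ^ n - 2 * q ^ (n div 2) + 2 ^ ((n + 2) div 2) - 2 ^ (n div 2))"
proof -
  note bound = special_orientable_seq_period_bound[OF assms(3) refl]
  show ?thesis
  proof (cases "even n")
    case True
    then obtain k where "n = 2 * k"
      by blast
    then have "n div 2 = k" "(n + 1) div 2 = k" "n mod 2 = 0" "(n + 2) div 2 = Suc k"
      by simp_all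
    with bound True show ?thesis
      by (cases "even q") simp_all
  next
    case False
    then obtain k where "n = 2 * k + 1"
      using oddE by blast
    then have "n div 2 = k" "(n + 1) div 2 = Suc k" "(n - 1) div 2 = k" "n mod 2 = 1"
        "(n + 3) div 2 = Suc (Suc k)"
      by simp_all
    with bound False show ?thesis
      by (cases "even q") (simp_all add: algebra_simps)
  qed
qed

end
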